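(* Let $\varepsilon>0$. (Lower case, $\tau\in(0,1]$:) If $\pi$ is a policy for which there exists $w\in\mathcal W_T$ with $d(w,\underline{q}^*_\tau)\le\varepsilon$ and $F^\pi(w)<\tau$, then $\pi$ is $\varepsilon$-optimal for the lower $\tau$-quantile criterion. (Upper case, $\tau\in[0,1)$:) If $\pi$ is a policy for which there exists $w\in\mathcal W_T$ with $d(w,\overline{q}^*_\tau)\le\varepsilon$ and $G^\pi(w)\ge 1-\tau$, then $\pi$ is $\varepsilon$-optimal for the upper $\tau$-quantile criterion.
   Context: An MDP is a tuple $(\mathcal S,\mathcal A,\mathcal P,r,s_0)$ with finite state set, finite action set, transition probabilities, reward function $r:\mathcal S\times\mathcal A\to\mathcal R$, initial state $s_0$, and finite horizon $T$; policies are sequences of $T$ (possibly history-dependent, randomized) decision rules. The wealth of a history is $w(h_0)=w_0$, $w(h_t)=w(h_{t-1})\circ r(s_{t-1},a_{t-1})$ for a binary operation $\circ$ with left identity $w_0$. The set $\mathcal W_T$ of wealth levels of $T$-histories is totally ordered by $\preceq_{\mathcal W}$, has least and greatest elements, and carries a distance $d$ consistent with this order. For a policy $\pi$, $p^\pi(w)$ is the probability that the generated $T$-history has wealth $w$; $F^\pi(w)=\sum_{w'\preceq_{\mathcal W}w}p^\pi(w')$ and $G^\pi(w)=\sum_{w\preceq_{\mathcal W}w'}p^\pi(w')$. Lower $\tau$-quantile: $\underline{q}^\pi_\tau=\min\{w:F^\pi(w)\ge\tau\}$; upper $\tau$-quantile: $\overline{q}^\pi_\tau=\max\{w:G^\pi(w)\ge1-\tau\}$;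 $\underline{q}^*_\tau=\max_\pi\underline{q}^\pi_\tau$, $\overline{q}^*_\tau=\max_\pi\overline{q}^\pi_\tau$ (max over all policies, w.r.t. $\prec_{\mathcal W}$). A policy $\pi$ is $\varepsilon$-optimal for the lower (resp. upper) $\tau$-quantile criterion if $d(\underline{q}^\pi_\tau,\underline{q}^*_\tau)\le\varepsilon$ (resp. $d(\overline{q}^\pi_\tau,\overline{q}^*_\tau)\le\varepsilon$). *)

theory Defs
  imports "HOL-Probability.Probability"
begin

text \<open>A history h_t = (s_0,a_0,...,s_{t-1},a_{t-1},s_t) is represented as the list of
  state-action pairs together with the current state.\<close>

type_synonym ('s,'a) hist = "('s \<times> 'a) list \<times> 's"
type_synonym ('s,'a) policy = "nat \<Rightarrow> ('s,'a) hist \<Rightarrow> 'a pmf"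

fun hist_dist :: "('s \<Rightarrow> 'a \<Rightarrow> 's pmf) \<Rightarrow> 's \<Rightarrow> ('s,'a) policy \<Rightarrow> nat \<Rightarrow> ('s,'a) hist pmf" where
  "hist_dist P s0 \<pi> 0 = return_pmf ([], s0)"
| "hist_dist P s0 \<pi> (Suc t) =
     bind_pmf (hist_dist P s0 \<pi> t) (\<lambda>h. bind_pmf (\<pi> t h)
       (\<lambda>a. map_pmf (\<lambda>s'. (fst h @ [(snd h, a)], s')) (P (snd h) a)))"

definition wealth :: "('s \<Rightarrow> 'a \<Rightarrow> 'w) \<Rightarrow> ('w \<Rightarrow> 'w \<Rightarrow> 'w) \<Rightarrow> 'w \<Rightarrow> ('s,'a) hist \<Rightarrow> 'w" where
  "wealth r op w0 h = foldl (\<lambda>w (s,a). op w (r s a)) w0 (fst h)"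

definition T_histories :: "'s \<Rightarrow> nat \<Rightarrow> ('s,'a) hist set" where
  "T_histories s0 T = {h. length (fst h) = T \<and> (fst h \<noteq> [] \<longrightarrow> fst (hd (fst h)) = s0)}"

definition wealth_levels :: "('s \<Rightarrow> 'a \<Rightarrow> 'w) \<Rightarrow> ('w \<Rightarrow> 'w \<Rightarrow> 'w) \<Rightarrow> 'w \<Rightarrow> 's \<Rightarrow> nat \<Rightarrow> 'w set" where
  "wealth_levels r op w0 s0 T = wealth r op w0 ` T_histories s0 T"

locale quantile_mdp =
  fixes P :: "'s::finite \<Rightarrow> 'a::finite \<Rightarrow> 's pmf"
    and r :: "'s \<Rightarrow> 'a \<Rightarrow> 'w"
    and s0 :: 's
    and T :: nat
    and op :: "'w \<Rightarrow> 'w \<Rightarrow> 'w"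
    and w0 :: 'w
    and le :: "'w \<Rightarrow> 'w \<Rightarrow> bool"
    and d :: "'w \<Rightarrow> 'w \<Rightarrow> real"
  assumes left_identity: "\<And>x. op w0 x = x"
    and le_refl: "\<And>x. x \<in> wealth_levels r op w0 s0 T \<Longrightarrow> le x x"
    and le_antisym: "\<And>x y. x \<in> wealth_levels r op w0 s0 T \<Longrightarrow> y \<in> wealth_levels r op w0 s0 T
                       \<Longrightarrow> le x y \<Longrightarrow> le y x \<Longrightarrow> x = y"
    and le_trans: "\<And>x y z. x \<in> wealth_levels r op w0 s0 T \<Longrightarrow> y \<in> wealth_levels r op w0 s0 T
                       \<Longrightarrow> z \<in> wealth_levels r op w0 s0 T \<Longrightarrow> le x y \<Longrightarrow> le y z \<Longrightarrow> le x z"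
    and le_total: "\<And>x y. x \<in> wealth_levels r op w0 s0 T \<Longrightarrow> y \<in> wealth_levels r op w0 s0 T
                       \<Longrightarrow> le x y \<or> le y x"
    and has_least: "\<exists>m\<in>wealth_levels r op w0 s0 T. \<forall>x\<in>wealth_levels r op w0 s0 T. le m x"
    and has_greatest: "\<exists>m\<in>wealth_levels r op w0 s0 T. \<forall>x\<in>wealth_levels r op w0 s0 T. le x m"
    and d_nonneg: "\<And>x y. x \<in> wealth_levels r op w0 s0 T \<Longrightarrow> y \<in> wealth_levels r op w0 s0 T \<Longrightarrow> 0 \<le> d x y"
    and d_zero: "\<And>x y. x \<in> wealth_levels r op w0 s0 T \<Longrightarrow> y \<in> wealth_levels r op w0 s0 T \<Longrightarrow> d x y = 0 \<longleftrightarrow> x = y"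
    and d_sym: "\<And>x y. x \<in> wealth_levels r op w0 s0 T \<Longrightarrow> y \<in> wealth_levels r op w0 s0 T \<Longrightarrow> d x y = d y x"
    and d_triangle: "\<And>x y z. x \<in> wealth_levels r op w0 s0 T \<Longrightarrow> y \<in> wealth_levels r op w0 s0 T
                       \<Longrightarrow> z \<in> wealth_levels r op w0 s0 T \<Longrightarrow> d x z \<le> d x y + d y z"
    and d_consistent: "\<And>x y z. x \<in> wealth_levels r op w0 s0 T \<Longrightarrow> y \<in> wealth_levels r op w0 s0 T
                       \<Longrightarrow> z \<in> wealth_levels r op w0 s0 T \<Longrightarrow> le x y \<Longrightarrow> le y z
                       \<Longrightarrow> d x y \<le> d x z \<and> d y z \<le> d x z"
begin

abbreviation W where "W \<equiv> wealth_levels r op w0 s0 T"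

definition wealth_dist :: "('s,'a) policy \<Rightarrow> 'w pmf" where
  "wealth_dist \<pi> = map_pmf (wealth r op w0) (hist_dist P s0 \<pi> T)"

definition p :: "('s,'a) policy \<Rightarrow> 'w \<Rightarrow> real" where
  "p \<pi> w = pmf (wealth_dist \<pi>) w"

definition F :: "('s,'a) policy \<Rightarrow> 'w \<Rightarrow> real" where
  "F \<pi> w = (\<Sum>w'\<in>{w'\<in>W. le w' w}. p \<pi> w')"

definition G :: "('s,'a) policy \<Rightarrow> 'w \<Rightarrow> real" where
  "G \<pi> w = (\<Sum>w'\<in>{w'\<in>W. le w w'}. p \<pi> w')"

definition lower_q :: "('s,'a) policy \<Rightarrow> real \<Rightarrow> 'w" where
  "lower_q \<pi> \<tau> = (THE q. q \<in> W \<and> F \<pi> q \<ge> \<tau> \<and> (\<forall>q'\<in>W. F \<pi> q' \<ge> \<tau> \<longrightarrow> le q q'))"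

definition upper_q :: "('s,'a) policy \<Rightarrow> real \<Rightarrow> 'w" where
  "upper_q \<pi> \<tau> = (THE q. q \<in> W \<and> G \<pi> q \<ge> 1 - \<tau> \<and> (\<forall>q'\<in>W. G \<pi> q' \<ge> 1 - \<tau> \<longrightarrow> le q' q))"

definition lower_q_opt :: "real \<Rightarrow> 'w" where
  "lower_q_opt \<tau> = (THE q. (\<exists>\<pi>. q = lower_q \<pi> \<tau>) \<and> (\<forall>\<pi>. le (lower_q \<pi> \<tau>) q))"

definition upper_q_opt :: "real \<Rightarrow> 'w" where
  "upper_q_opt \<tau> = (THE q. (\<exists>\<pi>. q = upper_q \<pi> \<tau>) \<and> (\<forall>\<pi>. le (upper_q \<pi> \<tau>) q))"

definition eps_opt_lower :: "real \<Rightarrow> real \<Rightarrow> ('s,'a) policy \<Rightarrow> bool" where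
  "eps_opt_lower \<epsilon> \<tau> \<pi> \<longleftrightarrow> d (lower_q \<pi> \<tau>) (lower_q_opt \<tau>) \<le> \<epsilon>"

definition eps_opt_upper :: "real \<Rightarrow> real \<Rightarrow> ('s,'a) policy \<Rightarrow> bool" where
  "eps_opt_upper \<epsilon> \<tau> \<pi> \<longleftrightarrow> d (upper_q \<pi> \<tau>) (upper_q_opt \<tau>) \<le> \<epsilon>"

end

end

theory Submission
  imports Defs
begin

text \<open>Let \<open>q\<^sub>\<pi>\<close> be the quantile of \<open>\<pi>\<close> and \<open>q\<^sup>*\<close> the optimal one, so that \<open>q\<^sub>\<pi> \<preceq> q\<^sup>*\<close>.
  In the lower case, \<open>F\<^sup>\<pi>(w) < \<tau> \<le> F\<^sup>\<pi>(q\<^sub>\<pi>)\<close> and monotonicity of \<open>F\<^sup>\<pi>\<close> force \<open>w \<prec> q\<^sub>\<pi>\<close>; in the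
  upper case, \<open>G\<^sup>\<pi>(w) \<ge> 1 - \<tau>\<close> and maximality of \<open>q\<^sub>\<pi>\<close> give \<open>w \<preceq> q\<^sub>\<pi>\<close>. Either way
  \<open>w \<preceq> q\<^sub>\<pi> \<preceq> q\<^sup>*\<close>, and consistency of \<open>d\<close> with the order yields
  \<open>d(q\<^sub>\<pi>, q\<^sup>*) \<le> d(w, q\<^sup>*) \<le> \<epsilon>\<close>.\<close>

locale linorder_on =
  fixes A :: "'a set" and R :: "'a \<Rightarrow> 'a \<Rightarrow> bool"
  assumes refl: "x \<in> A \<Longrightarrow> R x x"
    and antisym: "x \<in> A \<Longrightarrow> y \<in> A \<Longrightarrow> R x y \<Longrightarrow> R y x \<Longrightarrow> x = y"
    and trans: "x \<in> A \<Longrightarrow> y \<in> A \<Longrightarrow> z \<in> A \<Longrightarrow> R x y \<Longrightarrow> R y z \<Longrightarrow> R x z"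
    and total: "x \<in> A \<Longrightarrow> y \<in> A \<Longrightarrow> R x y \<or> R y x"
begin

definition greatest :: "'a set \<Rightarrow> 'a" where
  "greatest S = (THE g. g \<in> S \<and> (\<forall>x\<in>S. R x g))"

lemma finite_has_greatest:
  assumes "finite S" "S \<noteq> {}" "S \<subseteq> A"
  shows "\<exists>g\<in>S. \<forall>x\<in>S. R x g"
  using assms
proof (induction S rule: finite_ne_induct)
  case (singleton x)
  then show ?case using refl by auto
next
  case (insert y S)
  then obtain g where g: "g \<in> S" "\<forall>x\<in>S. R x g" and "y \<in> A" "S \<subseteq> A" by auto
  show ?case
  proof (cases "R g y")
    case True
    then have "\<forall>x\<in>S. R x y" using g trans \<open>y \<in> A\<close> \<open>S \<subseteq> A\<close> by blast
    then show ?thesis using refl \<open>y \<in> A\<close> by auto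
  next
    case False
    then have "R y g" using total \<open>y \<in> A\<close> g(1) \<open>S \<subseteq> A\<close> by blast
    then show ?thesis using g by auto
  qed
qed

lemma greatest_eqI:
  assumes "g \<in> S" "\<forall>x\<in>S. R x g" "S \<subseteq> A"
  shows "greatest S = g"
  unfolding greatest_def
  by (rule the_equality) (use assms antisym in blast)+

lemma greatest:
  assumes "finite S" "S \<noteq> {}" "S \<subseteq> A"
  shows greatest_in: "greatest S \<in> S"
    and greatest_ge: "x \<in> S \<Longrightarrow> R x (greatest S)"
proof -
  obtain g where "g \<in> S" "\<forall>x\<in>S. R x g"
    using finite_has_greatest[OF assms] by blast
  with assms(3) greatest_eqI show "greatest S \<in> S" "x \<in> S \<Longrightarrow> R x (greatest S)"
    by auto
qed

end

lemma set_pmf_hist_dist: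
  assumes "h \<in> set_pmf (hist_dist P s0 \<pi> t)"
  shows "h \<in> T_histories s0 t \<and> (fst h = [] \<longrightarrow> snd h = s0)"
  using assms
proof (induction t arbitrary: h)
  \<comment> \<open>The second conjunct tells which state heads the history once its first action is taken.\<close>
  case 0
  then show ?case by (simp add: T_histories_def)
next
  case (Suc t)
  then obtain h' a s' where h': "h' \<in> set_pmf (hist_dist P s0 \<pi> t)"
    and h: "h = (fst h' @ [(snd h', a)], s')" by auto
  from Suc.IH[OF h'] h show ?case
    by (cases "fst h'") (auto simp: T_histories_def)
qed

context quantile_mdp
begin

sublocale wealth_le: linorder_on W le
  by unfold_locales (auto intro: le_refl le_antisym le_trans dest: le_total)

sublocale wealth_ge: linorder_on W "\<lambda>x y. le y x"
  by unfold_locales (auto intro: le_refl le_antisym le_trans dest: le_total)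

lemma finite_W: "finite W"
proof -
  have "T_histories s0 T \<subseteq> {xs. set xs \<subseteq> UNIV \<and> length xs = T} \<times> UNIV"
    unfolding T_histories_def by auto
  then have "finite (T_histories s0 T :: ('s,'a) hist set)"
    by (rule finite_subset) (intro finite_cartesian_product finite_lists_length_eq; simp)
  then show ?thesis unfolding wealth_levels_def by simp
qed

lemma set_pmf_wealth_dist: "set_pmf (wealth_dist \<pi>) \<subseteq> W"
  using set_pmf_hist_dist
  unfolding wealth_dist_def wealth_levels_def by fastforce

lemma sum_p_W: "(\<Sum>w\<in>W. p \<pi> w) = 1"
  unfolding p_def by (rule sum_pmf_eq_1[OF finite_W set_pmf_wealth_dist])

lemma F_mono:
  assumes "a \<in> W" "b \<in> W" "le a b"
  shows "F \<pi> a \<le> F \<pi> b"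
proof -
  have "{w\<in>W. le w a} \<subseteq> {w\<in>W. le w b}"
    using assms le_trans by blast
  then show ?thesis
    unfolding F_def p_def using finite_W by (intro sum_mono2) auto
qed

lemma F_greatest_eq_1:
  assumes "\<forall>x\<in>W. le x t"
  shows "F \<pi> t = 1"
proof -
  have "{w\<in>W. le w t} = W" using assms by blast
  then show ?thesis unfolding F_def using sum_p_W by simp
qed

lemma G_least_eq_1:
  assumes "\<forall>x\<in>W. le b x"
  shows "G \<pi> b = 1"
proof -
  have "{w\<in>W. le b w} = W" using assms by blast
  then show ?thesis unfolding G_def using sum_p_W by simp
qed

lemma lower_q_eq: "lower_q \<pi> \<tau> = wealth_ge.greatest {q\<in>W. \<tau> \<le> F \<pi> q}"
  unfolding lower_q_def wealth_ge.greatest_def by (rule arg_cong[where f = The]) auto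

lemma upper_q_eq: "upper_q \<pi> \<tau> = wealth_le.greatest {q\<in>W. 1 - \<tau> \<le> G \<pi> q}"
  unfolding upper_q_def wealth_le.greatest_def by (rule arg_cong[where f = The]) auto

lemma lower_q_opt_eq: "lower_q_opt \<tau> = wealth_le.greatest (range (\<lambda>\<pi>. lower_q \<pi> \<tau>))"
  unfolding lower_q_opt_def wealth_le.greatest_def by (rule arg_cong[where f = The]) auto

lemma upper_q_opt_eq: "upper_q_opt \<tau> = wealth_le.greatest (range (\<lambda>\<pi>. upper_q \<pi> \<tau>))"
  unfolding upper_q_opt_def wealth_le.greatest_def by (rule arg_cong[where f = The]) auto

lemma lower_q_attains:
  assumes "\<tau> \<le> 1"
  shows "lower_q \<pi> \<tau> \<in> W" and "\<tau> \<le> F \<pi> (lower_q \<pi> \<tau>)"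
proof -
  obtain t where "t \<in> W" "\<forall>x\<in>W. le x t" using has_greatest by blast
  with assms F_greatest_eq_1 have "t \<in> {q\<in>W. \<tau> \<le> F \<pi> q}" by auto
  then have "lower_q \<pi> \<tau> \<in> {q\<in>W. \<tau> \<le> F \<pi> q}"
    unfolding lower_q_eq using finite_W by (intro wealth_ge.greatest_in) auto
  then show "lower_q \<pi> \<tau> \<in> W" "\<tau> \<le> F \<pi> (lower_q \<pi> \<tau>)" by auto
qed

lemma upper_q_bounds:
  assumes "0 \<le> \<tau>"
  shows "upper_q \<pi> \<tau> \<in> W"
    and "w \<in> W \<Longrightarrow> 1 - \<tau> \<le> G \<pi> w \<Longrightarrow> le w (upper_q \<pi> \<tau>)"
proof -
  obtain b where "b \<in> W" "\<forall>x\<in>W. le b x" using has_least by blast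
  with assms G_least_eq_1 have "b \<in> {q\<in>W. 1 - \<tau> \<le> G \<pi> q}" by auto
  then have "finite {q\<in>W. 1 - \<tau> \<le> G \<pi> q}" "{q\<in>W. 1 - \<tau> \<le> G \<pi> q} \<noteq> {}"
    using finite_W by auto
  from wealth_le.greatest[OF this] show "upper_q \<pi> \<tau> \<in> W"
    and "w \<in> W \<Longrightarrow> 1 - \<tau> \<le> G \<pi> w \<Longrightarrow> le w (upper_q \<pi> \<tau>)"
    unfolding upper_q_eq by auto
qed

lemma lower_q_opt_ge:
  assumes "\<tau> \<le> 1"
  shows "lower_q_opt \<tau> \<in> W" and "le (lower_q \<pi> \<tau>) (lower_q_opt \<tau>)"
proof -
  have "range (\<lambda>\<pi>. lower_q \<pi> \<tau>) \<subseteq> W" using lower_q_attains[OF assms] by auto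
  with finite_subset[OF this finite_W] wealth_le.greatest
  show "lower_q_opt \<tau> \<in> W" "le (lower_q \<pi> \<tau>) (lower_q_opt \<tau>)"
    unfolding lower_q_opt_eq by blast+
qed

lemma upper_q_opt_ge:
  assumes "0 \<le> \<tau>"
  shows "upper_q_opt \<tau> \<in> W" and "le (upper_q \<pi> \<tau>) (upper_q_opt \<tau>)"
proof -
  have "range (\<lambda>\<pi>. upper_q \<pi> \<tau>) \<subseteq> W" using upper_q_bounds(1)[OF assms] by auto
  with finite_subset[OF this finite_W] wealth_le.greatest
  show "upper_q_opt \<tau> \<in> W" "le (upper_q \<pi> \<tau>) (upper_q_opt \<tau>)"
    unfolding upper_q_opt_eq by blast+
qed

lemma eps_opt_lower_if_F_below:
  assumes "\<tau> \<le> 1" "w \<in> W" "d w (lower_q_opt \<tau>) \<le> \<epsilon>" "F \<pi> w < \<tau>"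
  shows "eps_opt_lower \<epsilon> \<tau> \<pi>"
proof -
  have q: "lower_q \<pi> \<tau> \<in> W" "\<tau> \<le> F \<pi> (lower_q \<pi> \<tau>)"
    using lower_q_attains[OF assms(1)] by auto
  have opt: "lower_q_opt \<tau> \<in> W" "le (lower_q \<pi> \<tau>) (lower_q_opt \<tau>)"
    using lower_q_opt_ge[OF assms(1)] by auto
  have "\<not> le (lower_q \<pi> \<tau>) w"
  proof
    assume "le (lower_q \<pi> \<tau>) w"
    then have "F \<pi> (lower_q \<pi> \<tau>) \<le> F \<pi> w" by (rule F_mono[OF q(1) assms(2)])
    with q(2) assms(4) show False by linarith
  qed
  then have "le w (lower_q \<pi> \<tau>)" using le_total[OF assms(2) q(1)] by blast
  then have "d (lower_q \<pi> \<tau>) (lower_q_opt \<tau>) \<le> d w (lower_q_opt \<tau>)"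
    using d_consistent[OF assms(2) q(1) opt(1) _ opt(2)] by blast
  with assms(3) show ?thesis unfolding eps_opt_lower_def by linarith
qed

lemma eps_opt_upper_if_G_above:
  assumes "0 \<le> \<tau>" "w \<in> W" "d w (upper_q_opt \<tau>) \<le> \<epsilon>" "1 - \<tau> \<le> G \<pi> w"
  shows "eps_opt_upper \<epsilon> \<tau> \<pi>"
proof -
  have q: "upper_q \<pi> \<tau> \<in> W" "le w (upper_q \<pi> \<tau>)"
    using upper_q_bounds[OF assms(1)] assms(2,4) by auto
  have opt: "upper_q_opt \<tau> \<in> W" "le (upper_q \<pi> \<tau>) (upper_q_opt \<tau>)"
    using upper_q_opt_ge[OF assms(1)] by auto
  have "d (upper_q \<pi> \<tau>) (upper_q_opt \<tau>) \<le> d w (upper_q_opt \<tau>)"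
    using d_consistent[OF assms(2) q(1) opt(1) q(2) opt(2)] by blast
  with assms(3) show ?thesis unfolding eps_opt_upper_def by linarith
qed

end

theorem lemma4:
  fixes P :: "'s::finite \<Rightarrow> 'a::finite \<Rightarrow> 's pmf"
    and r :: "'s \<Rightarrow> 'a \<Rightarrow> 'w" and s0 :: 's and T :: nat
    and op :: "'w \<Rightarrow> 'w \<Rightarrow> 'w" and w0 :: 'w
    and le :: "'w \<Rightarrow> 'w \<Rightarrow> bool" and d :: "'w \<Rightarrow> 'w \<Rightarrow> real"
    and \<epsilon> :: real
  assumes "quantile_mdp r s0 T op w0 le d"
    and "\<epsilon> > 0"
  shows "(\<forall>(\<tau>::real) (\<pi>::('s,'a) policy). 0 < \<tau> \<and> \<tau> \<le> 1 \<and>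
            (\<exists>w\<in>wealth_levels r op w0 s0 T.
               d w (quantile_mdp.lower_q_opt P r s0 T op w0 le \<tau>) \<le> \<epsilon>
               \<and> quantile_mdp.F P r s0 T op w0 le \<pi> w < \<tau>)
          \<longrightarrow> quantile_mdp.eps_opt_lower P r s0 T op w0 le d \<epsilon> \<tau> \<pi>)
       \<and> (\<forall>(\<tau>::real) (\<pi>::('s,'a) policy). 0 \<le> \<tau> \<and> \<tau> < 1 \<and>
            (\<exists>w\<in>wealth_levels r op w0 s0 T.
               d w (quantile_mdp.upper_q_opt P r s0 T op w0 le \<tau>) \<le> \<epsilon>
               \<and> quantile_mdp.G P r s0 T op w0 le \<pi> w \<ge> 1 - \<tau>)
          \<longrightarrow> quantile_mdp.eps_opt_upper P r s0 T op w0 le d \<epsilon> \<tau> \<pi>)"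
proof -
  interpret quantile_mdp P r s0 T op w0 le d by fact
  show ?thesis
    using eps_opt_lower_if_F_below eps_opt_upper_if_G_above by auto
qed

end
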